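(* The Goldman Lie algebra $\mathfrak{G}_{\Sigma_{1,0}}$ of the closed torus over $\mathbb{Q}$ is generated, as a Lie algebra over $\mathbb{Q}$, by the three elements $a$, $a^{-1}b^{-1}+b+1$, and $b$.
   Context: Let $\Sigma_{1,0}=T^2$ be the closed oriented torus and $\hat\pi$ its set of free homotopy classes of loops, identified with $\pi_1(T^2)\cong\mathbb{Z}^2$; with $a,b$ the standard generators, every class is written $a^ib^j$, $(i,j)\in\mathbb{Z}^2$, and $1=a^0b^0$ is the class of the contractible loop. The Goldman bracket (defined for classes meeting transversally by $[\alpha,\beta]=\sum_{p\in\alpha\cap\beta}\epsilon(p)\,\alpha*_p\beta$, with $\epsilon(p)$ the intersection sign and $\alpha*_p\beta$ the loop product at $p$, extended bilinearly) is given on the torus by $[a^ib^j,a^kb^l]=(il-jk)\,a^{i+k}b^{j+l}$. $\mathfrak{G}_{\Sigma_{1,0}}$ denotes the $\mathbb{Q}$-vector space with basis $\hat\pi$ with this bracket. *)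

theory Defs
  imports Complex_Main "HOL-Library.Poly_Mapping"
begin

text \<open>The Goldman Lie algebra of the closed torus over the rationals: the rational vector
space with basis the free homotopy classes a^i b^j, identified with pairs (i,j) of integers,
realised as finitely supported functions from int x int to rat.\<close>

type_synonym goldman_torus = "(int \<times> int) \<Rightarrow>\<^sub>0 rat"

definition gcls :: "int \<Rightarrow> int \<Rightarrow> goldman_torus" where
  "gcls i j = Poly_Mapping.single (i, j) 1"

definition gscale :: "rat \<Rightarrow> goldman_torus \<Rightarrow> goldman_torus" where
  "gscale r x = Poly_Mapping.map (\<lambda>c. r * c) x"

definition gbracket :: "goldman_torus \<Rightarrow> goldman_torus \<Rightarrow> goldman_torus" where
  "gbracket x y = (\<Sum>p\<in>Poly_Mapping.keys x. \<Sum>q\<in>Poly_Mapping.keys y.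
      Poly_Mapping.single (fst p + fst q, snd p + snd q)
        (of_int (fst p * snd q - snd p * fst q) * Poly_Mapping.lookup x p * Poly_Mapping.lookup y q))"

inductive_set lie_gen :: "goldman_torus set \<Rightarrow> goldman_torus set" for S where
  gen: "x \<in> S \<Longrightarrow> x \<in> lie_gen S"
| zero: "0 \<in> lie_gen S"
| add: "x \<in> lie_gen S \<Longrightarrow> y \<in> lie_gen S \<Longrightarrow> x + y \<in> lie_gen S"
| scale: "x \<in> lie_gen S \<Longrightarrow> gscale r x \<in> lie_gen S"
| bracket: "x \<in> lie_gen S \<Longrightarrow> y \<in> lie_gen S \<Longrightarrow> gbracket x y \<in> lie_gen S"

end

theory Submission
  imports Defs
begin

text \<open>The bracket [a^i b^j, a^k b^l] is a nonzero multiple of a^(i+k) b^(j+l) as soon as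
il - jk \<noteq> 0, so a Lie subalgebra containing a^(\<plusminus>1) and b^(\<plusminus>1) contains every class
other than 1: brackets with a^(\<plusminus>1) move the first exponent along a row j \<noteq> 0, brackets
with b^(\<plusminus>1) move the second exponent along a column i \<noteq> 0. From the three generators,
[b, a^-1 b^-1 + b + 1] = a^-1 and ab - [a, a^-1 b^-1 + b + 1] = b^-1, and finally
1 = (a^-1 b^-1 + b + 1) - a^-1 b^-1 - b.\<close>

lemma gbracket_eq_sum_over_superset:
  assumes "finite A" "finite B" "Poly_Mapping.keys x \<subseteq> A" "Poly_Mapping.keys y \<subseteq> B"
  shows "gbracket x y = (\<Sum>p\<in>A. \<Sum>q\<in>B.
      Poly_Mapping.single (fst p + fst q, snd p + snd q)
        (of_int (fst p * snd q - snd p * fst q) * Poly_Mapping.lookup x p * Poly_Mapping.lookup y q))"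
  unfolding gbracket_def using assms
  by (intro sum.mono_neutral_cong_left) (auto simp: in_keys_iff intro!: sum.mono_neutral_left)

lemma gbracket_add_right: "gbracket x (y + z) = gbracket x y + gbracket x z"
proof -
  let ?B = "Poly_Mapping.keys y \<union> Poly_Mapping.keys z"
  have B: "finite ?B" by simp
  have "Poly_Mapping.keys (y + z) \<subseteq> ?B" and "Poly_Mapping.keys y \<subseteq> ?B" and "Poly_Mapping.keys z \<subseteq> ?B"
    using keys_add[of y z] by auto
  note expand = this[THEN gbracket_eq_sum_over_superset[OF finite_keys B order.refl]]
  show ?thesis
    unfolding expand by (simp add: lookup_add distrib_left single_add sum.distrib)
qed

lemma gbracket_gcls:
  "gbracket (gcls i j) (gcls k l) = Poly_Mapping.single (i + k, j + l) (of_int (i * l - j * k))"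
  unfolding gbracket_def gcls_def by simp

lemma gscale_single: "gscale r (Poly_Mapping.single p c) = Poly_Mapping.single p (r * c)"
  unfolding gscale_def by simp

lemma poly_mapping_eq_sum_single:
  "f = (\<Sum>p\<in>Poly_Mapping.keys f. Poly_Mapping.single p (Poly_Mapping.lookup f p))"
  by (rule poly_mapping_eqI) (simp add: lookup_sum lookup_single when_def in_keys_iff)

lemma lie_gen_sum:
  "finite A \<Longrightarrow> (\<And>x. x \<in> A \<Longrightarrow> g x \<in> lie_gen S) \<Longrightarrow> sum g A \<in> lie_gen S"
  by (induction A rule: finite_induct) (auto intro: lie_gen.intros)

lemma lie_gen_diff: "x \<in> lie_gen S \<Longrightarrow> y \<in> lie_gen S \<Longrightarrow> x - y \<in> lie_gen S"
proof -
  assume "x \<in> lie_gen S" "y \<in> lie_gen S"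
  moreover have "gscale (-1) y = - y"
    by (rule poly_mapping_eqI) (simp add: gscale_def map.rep_eq when_def)
  ultimately show ?thesis by (metis lie_gen.add lie_gen.scale diff_conv_add_uminus)
qed

lemma lie_gen_eq_UNIV_if_gcls_mem:
  assumes "\<And>i j. gcls i j \<in> lie_gen S"
  shows "lie_gen S = UNIV"
proof -
  have "Poly_Mapping.single (i, j) r \<in> lie_gen S" for i j r
    using lie_gen.scale[OF assms, of r i j] by (simp add: gcls_def gscale_single)
  then have "f \<in> lie_gen S" for f
    by (subst poly_mapping_eq_sum_single) (auto intro: lie_gen_sum)
  then show ?thesis by auto
qed

lemma gcls_add_mem_lie_gen:
  assumes "gcls i j \<in> lie_gen S" "gcls k l \<in> lie_gen S" "i * l - j * k \<noteq> 0"
  shows "gcls (i + k) (j + l) \<in> lie_gen S"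
proof -
  let ?d = "rat_of_int (i * l - j * k)"
  have "gscale (1 / ?d) (gbracket (gcls i j) (gcls k l)) \<in> lie_gen S"
    using assms by (intro lie_gen.scale lie_gen.bracket)
  moreover have "?d \<noteq> 0" using assms(3) by (metis of_int_eq_0_iff)
  ultimately show ?thesis
    unfolding gbracket_gcls gscale_single by (simp add: gcls_def del: of_int_diff of_int_mult)
qed

lemma gcls_mem_lie_gen_shift_fst:
  assumes "j \<noteq> 0" "gcls 1 0 \<in> lie_gen S" "gcls (-1) 0 \<in> lie_gen S" "gcls i0 j \<in> lie_gen S"
  shows "gcls i j \<in> lie_gen S"
proof (induction i rule: int_induct[where k = i0])
  case base
  then show ?case using assms by simp
next
  case (step1 i)
  from gcls_add_mem_lie_gen[OF assms(2) step1(2)] assms(1) show ?case by (simp add: add.commute)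
next
  case (step2 i)
  from gcls_add_mem_lie_gen[OF assms(3) step2(2)] assms(1) show ?case by simp
qed

lemma gcls_mem_lie_gen_shift_snd:
  assumes "i \<noteq> 0" "gcls 0 1 \<in> lie_gen S" "gcls 0 (-1) \<in> lie_gen S" "gcls i j0 \<in> lie_gen S"
  shows "gcls i j \<in> lie_gen S"
proof (induction j rule: int_induct[where k = j0])
  case base
  then show ?case using assms by simp
next
  case (step1 j)
  from gcls_add_mem_lie_gen[OF assms(2) step1(2)] assms(1) show ?case by (simp add: add.commute)
next
  case (step2 j)
  from gcls_add_mem_lie_gen[OF assms(3) step2(2)] assms(1) show ?case by simp
qed

lemma gcls_mem_lie_gen_if_nontrivial:
  assumes "gcls 1 0 \<in> lie_gen S" "gcls (-1) 0 \<in> lie_gen S"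
    and "gcls 0 1 \<in> lie_gen S" "gcls 0 (-1) \<in> lie_gen S"
    and "(i, j) \<noteq> (0, 0)"
  shows "gcls i j \<in> lie_gen S"
proof -
  have "gcls 1 1 \<in> lie_gen S"
    using gcls_add_mem_lie_gen[OF assms(1,3)] by simp
  then have row1: "gcls k 1 \<in> lie_gen S" for k
    using gcls_mem_lie_gen_shift_fst[OF _ assms(1,2)] by simp
  then have nonzero_column: "gcls k l \<in> lie_gen S" if "k \<noteq> 0" for k l
    using gcls_mem_lie_gen_shift_snd[OF that assms(3,4)] by blast
  show ?thesis
  proof (cases "i = 0")
    case True
    with assms(5) have "j \<noteq> 0" by simp
    then show ?thesis
      using gcls_mem_lie_gen_shift_fst[OF _ assms(1,2) nonzero_column[of 1 j]] by simp
  next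
    case False
    then show ?thesis by (rule nonzero_column)
  qed
qed

theorem mainTheorem2:
  shows "lie_gen {gcls 1 0, gcls (-1) (-1) + gcls 0 1 + gcls 0 0, gcls 0 1} = UNIV"
proof -
  define c where "c = gcls (-1) (-1) + gcls 0 1 + gcls 0 0"
  define S where "S = {gcls 1 0, c, gcls 0 1}"
  have a: "gcls 1 0 \<in> lie_gen S" and b: "gcls 0 1 \<in> lie_gen S" and c: "c \<in> lie_gen S"
    unfolding S_def by (auto intro: lie_gen.gen)
  have "gcls 1 1 - gbracket (gcls 1 0) c \<in> lie_gen S"
    using gcls_add_mem_lie_gen[OF a b] by (auto intro: lie_gen_diff lie_gen.bracket a c)
  moreover have "gcls 1 1 - gbracket (gcls 1 0) c = gcls 0 (-1)"
    unfolding c_def gbracket_add_right gbracket_gcls by (simp add: gcls_def flip: single_uminus)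
  moreover have "gbracket (gcls 0 1) c = gcls (-1) 0"
    unfolding c_def gbracket_add_right gbracket_gcls by (simp add: gcls_def)
  ultimately have nontrivial: "gcls i j \<in> lie_gen S" if "(i, j) \<noteq> (0, 0)" for i j
    using gcls_mem_lie_gen_if_nontrivial[OF a _ b _ that] lie_gen.bracket[OF b c] by auto
  have "c - gcls (-1) (-1) - gcls 0 1 \<in> lie_gen S"
    using c nontrivial by (intro lie_gen_diff) auto
  then have "gcls 0 0 \<in> lie_gen S" by (simp add: c_def)
  with nontrivial have "gcls i j \<in> lie_gen S" for i j by (cases "(i, j) = (0, 0)") auto
  then show ?thesis
    using lie_gen_eq_UNIV_if_gcls_mem unfolding S_def c_def by blast
qed

end
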